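(* For every $n \geqslant 2$ there exist a finite alphabet $\Sigma_n$, a partial function $\delta_n: \{1,\ldots,n\} \times \Sigma_n \to \{1,\ldots,n\} \times \{-1,+1\}$, and a string $w_n \in \Sigma_n^*$ of length $3 \cdot 2^{n-2} - 1$ such that: (1) for every position $i \in \{1, \ldots, |w_n|\}$, the computation of $\delta_n$ on $w_n$ started at position $i$ in state $n$ leaves $w_n$, and the first time it leaves $w_n$ it does so by a move from position $|w_n|$ to the right into state $1$; (2) for every nonempty string $u \in \Sigma_n^*$, if there exists a position $i \in \{1,\ldots,|u|\}$ such that the computation of $\delta_n$ on $u$ started at position $i$ in state $n$ leaves $u$, and the first time it leaves $u$ it does so by a move from position $|u|$ to the right into state $1$, then $|u| \geqslant |w_n|$.
   Context: For a partial transition function $\delta: Q \times \Sigma \to Q \times \{-1,+1\}$ (no end-markers, no initial or accepting states) and a string $u = c_1 \cdots c_m \in \Sigma^*$, the computation started at position $i \in \{1,\ldots,m\}$ in state $q$ is the sequence of configurations (state, position) defined as follows: in configuration $(p, j)$ with $1 \leqslant j \leqslant m$, if $\delta(p, c_j) = (r, d)$ the next configuration is $(r, j+d)$; if $\delta(p, c_j)$ is undefined the computation halts without leaving $u$. The computation leaves $u$ when it reaches a position $j+d \notin \{1,\ldots,m\}$, i.e. moves left from position $1$ or right from position $m$; it may also run forever inside $u$. *)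

theory Defs
  imports Main
begin

definition partial_tf :: "nat \<Rightarrow> nat set \<Rightarrow> (nat \<Rightarrow> nat \<Rightarrow> (nat \<times> int) option) \<Rightarrow> bool" where
  "partial_tf n Sig delta \<longleftrightarrow>
     (\<forall>q c r d. delta q c = Some (r, d) \<longrightarrow>
        q \<in> {1..n} \<and> c \<in> Sig \<and> r \<in> {1..n} \<and> d \<in> {-1, 1})"

text \<open>exits delta u p j q k: the computation of delta on u started at position j
  (1-based) in state p leaves u, and the (first) time it leaves u it reaches
  configuration (q, k) with k outside {1..|u|}.\<close>
inductive exits :: "(nat \<Rightarrow> nat \<Rightarrow> (nat \<times> int) option) \<Rightarrow> nat list \<Rightarrow> nat \<Rightarrow> int \<Rightarrow> nat \<Rightarrow> int \<Rightarrow> bool"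
  for delta u where
  leave: "\<lbrakk> 1 \<le> j; j \<le> int (length u); delta p (u ! nat (j - 1)) = Some (r, d);
           j + d \<notin> {1..int (length u)} \<rbrakk> \<Longrightarrow> exits delta u p j r (j + d)"
| move: "\<lbrakk> 1 \<le> j; j \<le> int (length u); delta p (u ! nat (j - 1)) = Some (r, d);
           j + d \<in> {1..int (length u)}; exits delta u r (j + d) q k \<rbrakk> \<Longrightarrow> exits delta u p j q k"

end

theory Submission
  imports Defs
begin

text \<open>The level-n word is
  \<open>w' # w''\<close>, where \<open>w'\<close> and \<open>w''\<close> are two copies of the level-(n-1) word
  over disjoint alphabets and \<open>#\<close> is a separator. In the top state n the machine sweeps
  towards the separator (rightwards on the left copy, leftwards on the right copy), steps
  left onto the last letter of \<open>w'\<close> in state n-1, runs the level-(n-1) machine until it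
  leaves \<open>w'\<close> to the right in state 1, crosses the separator into state n-1, and runs the
  level-(n-1) machine on \<open>w''\<close>.

  Conversely, state n is left only by stepping left off a separator, the states below n
  never return to n and cross separators only rightwards from state 1 into state n-1, and
  on separator-free blocks they simulate the level-(n-1) machine. So the block just left
  of the first separator reached and the last block of any accepted word both carry a
  level-(n-1) computation from state n-1 that leaves the block to the right in state 1,
  whence the length is at least twice the level-(n-1) bound plus one.\<close>

lemma exits_start:
  assumes "exits \<delta> u p j q k"
  shows "1 \<le> j \<and> j \<le> int (length u) \<and> (\<exists>r d. \<delta> p (u ! nat (j - 1)) = Some (r, d))"
  using assms by (cases rule: exits.cases) auto

lemma exits_transfer:
  assumes "exits \<delta> u p j q k"
    and "\<And>q c x. c \<in> set u \<Longrightarrow> \<delta> q c = Some x \<Longrightarrow> \<delta>' q c = Some x"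
  shows "exits \<delta>' u p j q k"
  using assms
proof (induction rule: exits.induct)
  case (leave j p r d)
  then have "u ! nat (j - 1) \<in> set u" by (intro nth_mem) linarith
  with leave show ?case by (auto intro: exits.leave)
next
  case (move j p r d q k)
  then have "u ! nat (j - 1) \<in> set u" by (intro nth_mem) linarith
  with move show ?case by (auto intro: exits.move)
qed

lemma exits_map:
  assumes "exits \<delta> v p j q k" and "p \<in> Q"
    and closed: "\<And>q c r d. q \<in> Q \<Longrightarrow> \<delta> q c = Some (r, d) \<Longrightarrow> r \<in> Q"
    and agree: "\<And>q c. q \<in> Q \<Longrightarrow> \<delta>' q (f c) = \<delta> q c"
  shows "exits \<delta>' (map f v) p j q k"
  using assms(1,2)
proof (induction rule: exits.induct)
  case (leave j p r d)
  then have "\<delta>' p (map f v ! nat (j - 1)) = Some (r, d)"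
    by (simp add: agree nat_less_iff)
  with leave show ?case by (auto intro: exits.leave)
next
  case (move j p r d q k)
  then have "\<delta>' p (map f v ! nat (j - 1)) = Some (r, d)"
    by (simp add: agree nat_less_iff)
  with move closed show ?case by (auto intro: exits.move)
qed

lemma nth_append_infix:
  assumes "int (length x) < j" "j \<le> int (length x + length y)"
  shows "(x @ y @ z) ! nat (j - 1) = y ! nat (j - int (length x) - 1)"
proof -
  have "nat (j - 1) = length x + nat (j - int (length x) - 1)"
       "nat (j - int (length x) - 1) < length y"
    using assms by auto
  then show ?thesis by (simp add: nth_append)
qed

lemma exits_infix:
  assumes "exits \<delta> y p j q k" and u: "u = x @ y @ z"
    and continue: "k + int (length x) \<in> {1..int (length u)} \<Longrightarrow> exits \<delta> u q (k + int (length x)) q' k'"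
    and stop: "k + int (length x) \<notin> {1..int (length u)} \<Longrightarrow> q' = q \<and> k' = k + int (length x)"
  shows "exits \<delta> u p (j + int (length x)) q' k'"
  using assms(1) continue stop
proof (induction rule: exits.induct)
  case (leave j p r d)
  then have step: "\<delta> p (u ! nat (j + int (length x) - 1)) = Some (r, d)"
    using nth_append_infix[of x "j + int (length x)" y z] u by simp
  have pos: "1 \<le> j + int (length x)" "j + int (length x) \<le> int (length u)"
    using leave u by auto
  show ?case
  proof (cases "j + d + int (length x) \<in> {1..int (length u)}")
    case True
    then show ?thesis
      using exits.move[where delta = \<delta> and u = u and j = "j + int (length x)", OF pos step] leave
      by (simp add: algebra_simps)
  next
    case False
    then show ?thesis
      using exits.leave[where delta = \<delta> and u = u and j = "j + int (length x)", OF pos step] leave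
      by (simp add: algebra_simps)
  qed
next
  case (move j p r d q k)
  then have step: "\<delta> p (u ! nat (j + int (length x) - 1)) = Some (r, d)"
    using nth_append_infix[of x "j + int (length x)" y z] u by simp
  have "1 \<le> j + int (length x)" "j + int (length x) \<le> int (length u)"
       "j + int (length x) + d \<in> {1..int (length u)}"
    using move u by auto
  then show ?case
    using exits.move[where delta = \<delta> and u = u and j = "j + int (length x)", OF _ _ step] move
    by (simp add: algebra_simps)
qed

lemma exits_drift:
  assumes "\<And>i. i < t \<Longrightarrow> j + int i * d \<in> {1..int (length u)} \<and>
                           \<delta> p (u ! nat (j + int i * d - 1)) = Some (p, d)"
    and "j + int t * d \<in> {1..int (length u)}" and "exits \<delta> u p (j + int t * d) q k"
  shows "exits \<delta> u p j q k"
  using assms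
proof (induction t arbitrary: j)
  case 0
  then show ?case by simp
next
  case (Suc t)
  have "exits \<delta> u p (j + d) q k"
    using Suc.IH[of "j + d"] Suc.prems by (fastforce simp: algebra_simps)
  moreover have "j \<in> {1..int (length u)}" "\<delta> p (u ! nat (j - 1)) = Some (p, d)"
    using Suc.prems(1)[of 0] by auto
  moreover have "j + d \<in> {1..int (length u)}"
    using Suc.prems(1)[of 1] Suc.prems(2) by (cases t) auto
  ultimately show ?case by (auto intro: exits.move)
qed

abbreviation is_sep :: "nat \<Rightarrow> bool" where
  "is_sep c \<equiv> c mod 3 = 2"

text \<open>For \<open>n \<ge> 3\<close> the letters \<open>3c\<close> and \<open>3c + 1\<close> encode the level-(n-1) letter \<open>c\<close>
  in the left and in the right copy, and letters congruent to 2 are separators.\<close>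

fun level_tf :: "nat \<Rightarrow> nat \<Rightarrow> nat \<Rightarrow> (nat \<times> int) option" where
  "level_tf n q c =
     (if n \<le> 2 then
        (if q = 2 \<and> c = 0 then Some (2, 1) else if q = 2 \<and> c = 1 then Some (1, -1)
         else if q = 1 \<and> c \<le> 1 then Some (1, 1) else None)
      else if is_sep c then
        (if q = n then Some (n - 1, -1) else if q = 1 then Some (n - 1, 1) else None)
      else if q = n then Some (n, if c mod 3 = 0 then 1 else -1)
      else level_tf (n - 1) q (c div 3))"

fun level_word :: "nat \<Rightarrow> nat list" where
  "level_word n =
     (if n \<le> 2 then [0, 1]
      else map (\<lambda>c. 3 * c) (level_word (n - 1)) @ 2 # map (\<lambda>c. 3 * c + 1) (level_word (n - 1)))"

declare level_tf.simps [simp del] level_word.simps [simp del]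

lemma level_tf_2:
  "level_tf 2 q c =
     (if q = 2 \<and> c = 0 then Some (2, 1) else if q = 2 \<and> c = 1 then Some (1, -1)
      else if q = 1 \<and> c \<le> 1 then Some (1, 1) else None)"
  by (simp add: level_tf.simps)

lemma level_tf_sep:
  "3 \<le> n \<Longrightarrow> is_sep c \<Longrightarrow>
     level_tf n q c = (if q = n then Some (n - 1, -1) else if q = 1 then Some (n - 1, 1) else None)"
  by (simp add: level_tf.simps)

lemma level_tf_top:
  "3 \<le> n \<Longrightarrow> \<not> is_sep c \<Longrightarrow> level_tf n n c = Some (n, if c mod 3 = 0 then 1 else -1)"
  by (simp add: level_tf.simps)

lemma level_tf_lower:
  "3 \<le> n \<Longrightarrow> q < n \<Longrightarrow> \<not> is_sep c \<Longrightarrow> level_tf n q c = level_tf (n - 1) q (c div 3)"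
  by (simp add: level_tf.simps)

lemma level_tf_range:
  "level_tf n q c = Some (r, d) \<Longrightarrow> 2 \<le> n \<Longrightarrow> q \<in> {1..n} \<and> r \<in> {1..n} \<and> d \<in> {-1, 1}"
proof (induction n q c rule: level_tf.induct)
  case (1 n q c)
  show ?case
  proof (cases "n \<le> 2 \<or> is_sep c \<or> q = n")
    case True
    with "1.prems" show ?thesis by (auto simp: level_tf.simps split: if_splits)
  next
    case False
    with "1.prems" have "level_tf (n - 1) q (c div 3) = Some (r, d)"
      by (simp add: level_tf.simps)
    with "1.IH" False show ?thesis by fastforce
  qed
qed

lemma level_tf_below:
  assumes "3 \<le> n" "q < n" "level_tf n q c = Some (r, d)"
  shows "r < n"
proof (cases "is_sep c")
  case True
  with assms show ?thesis by (auto simp: level_tf_sep split: if_splits)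
next
  case False
  with assms have "level_tf (n - 1) q (c div 3) = Some (r, d)"
    by (simp add: level_tf_lower)
  with assms(1) show ?thesis using level_tf_range[of "n - 1"] by fastforce
qed

lemma length_level_word: "2 \<le> n \<Longrightarrow> length (level_word n) = 3 * 2 ^ (n - 2) - 1"
proof (induction n rule: nat_induct_at_least)
  case base
  then show ?case by (simp add: level_word.simps)
next
  case (Suc n)
  have "length (level_word (Suc n)) = 2 * length (level_word n) + 1"
    using Suc.hyps by (simp add: level_word.simps)
  moreover have "(1::nat) \<le> 2 ^ (n - 2)" by simp
  moreover have "2 ^ (Suc n - 2) = 2 * (2::nat) ^ (n - 2)"
    using Suc.hyps by (simp add: Suc_diff_le flip: power_Suc)
  ultimately show ?case using Suc.IH by linarith
qed


lemma exits_level_word_2: "i \<in> {1..2} \<Longrightarrow> exits (level_tf 2) [0, 1] 2 i 1 3"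
proof -
  have "exits (level_tf 2) [0, 1] 1 2 1 3"
    by (subst exits.simps) (simp add: level_tf_2)
  then have "exits (level_tf 2) [0, 1] 1 1 1 3"
    by (subst exits.simps) (simp add: level_tf_2)
  then have at2: "exits (level_tf 2) [0, 1] 2 2 1 3"
    by (subst exits.simps) (simp add: level_tf_2)
  then have "exits (level_tf 2) [0, 1] 2 1 1 3"
    by (subst exits.simps) (simp add: level_tf_2)
  moreover assume "i \<in> {1..2}"
  then have "i = 1 \<or> i = 2" by auto
  ultimately show ?thesis using at2 by auto
qed

lemma exits_level_up:
  assumes n: "3 \<le> n" and v: "v \<noteq> []"
    and runs: "\<And>i. i \<in> {1..int (length v)} \<Longrightarrow> exits (level_tf (n - 1)) v (n - 1) i 1 (int (length v) + 1)"
    and u: "u = map (\<lambda>c. 3 * c) v @ 2 # map (\<lambda>c. 3 * c + 1) v"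
    and i: "i \<in> {1..int (length u)}"
  shows "exits (level_tf n) u n i 1 (int (length u) + 1)"
proof -
  define m where "m = int (length v)"
  have len: "int (length u) = 2 * m + 1" using u m_def by simp
  have v1: "1 \<le> length v" using v by (simp add: Suc_le_eq)
  have copy: "exits (level_tf n) (map f v) (n - 1) j 1 (m + 1)"
    if "j \<in> {1..m}" and f: "\<And>c. \<not> is_sep (f c) \<and> f c div 3 = c" for f j
  proof (rule exits_map[where Q = "{..<n}"])
    show "exits (level_tf (n - 1)) v (n - 1) j 1 (m + 1)" using runs that m_def by simp
    show "r \<in> {..<n}" if "level_tf (n - 1) q c = Some (r, d)" for q c r d
      using level_tf_range[OF that] n by fastforce
    show "level_tf n q (f c) = level_tf (n - 1) q c" if "q \<in> {..<n}" for q c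
      using level_tf_lower[OF n _ f[THEN conjunct1]] f that by simp
  qed (use n in auto)
  have f_left: "\<not> is_sep (3 * c) \<and> 3 * c div 3 = c" for c :: nat by simp
  have f_right: "\<not> is_sep (3 * c + 1) \<and> (3 * c + 1) div 3 = c" for c :: nat by presburger
  have right: "exits (level_tf n) u (n - 1) (m + 2) 1 (int (length u) + 1)"
    using exits_infix[OF copy[OF _ f_right, of 1], of u "map (\<lambda>c. 3 * c) v @ [2]" "[]"]
      u v1 len m_def by (simp add: algebra_simps)
  have sep: "u ! nat (m + 1 - 1) = 2" using u m_def by (simp add: nth_append)
  have cross: "exits (level_tf n) u 1 (m + 1) 1 (int (length u) + 1)"
    by (rule exits.move[where r = "n - 1" and d = 1])
       (use sep right len n v1 m_def in \<open>auto simp: level_tf_sep algebra_simps\<close>)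
  have left: "exits (level_tf n) u (n - 1) m 1 (int (length u) + 1)"
    using exits_infix[OF copy[OF _ f_left, of m], of u "[]" "2 # map (\<lambda>c. 3 * c + 1) v"]
      cross u v1 len m_def by simp
  have centre: "exits (level_tf n) u n (m + 1) 1 (int (length u) + 1)"
    by (rule exits.move[where r = "n - 1" and d = "-1"])
       (use sep left len n v1 m_def in \<open>auto simp: level_tf_sep algebra_simps\<close>)
  show ?thesis
  proof (cases "i \<le> m + 1")
    case True
    show ?thesis
    proof (rule exits_drift[where t = "nat (m + 1 - i)" and d = 1])
      fix k assume "k < nat (m + 1 - i)"
      then have "nat (i + int k * 1 - 1) < length v" using i m_def by auto
      then show "i + int k * 1 \<in> {1..int (length u)} \<and>
                 level_tf n n (u ! nat (i + int k * 1 - 1)) = Some (n, 1)"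
        using u i n len m_def by (auto simp: nth_append level_tf_top)
    qed (use True i len centre in auto)
  next
    case False
    show ?thesis
    proof (rule exits_drift[where t = "nat (i - m - 1)" and d = "-1"])
      fix k assume "k < nat (i - m - 1)"
      then have "nat (i + int k * -1 - 1) = length v + Suc (nat (i - int k - m - 2))"
                "nat (i - int k - m - 2) < length v"
        using i len m_def by auto
      then show "i + int k * -1 \<in> {1..int (length u)} \<and>
                 level_tf n n (u ! nat (i + int k * -1 - 1)) = Some (n, -1)"
        using u i n len m_def f_right by (auto simp: nth_append level_tf_top)
    qed (use False i len centre in \<open>auto simp: add.commute\<close>)
  qed
qed

lemma level_word_exits:
  assumes "2 \<le> n" "i \<in> {1..int (length (level_word n))}"
  shows "exits (level_tf n) (level_word n) n i 1 (int (length (level_word n)) + 1)"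
  using assms
proof (induction n arbitrary: i rule: nat_induct_at_least)
  case base
  then show ?case using exits_level_word_2 by (simp add: level_word.simps)
next
  case (Suc n)
  have "level_word n \<noteq> []" by (simp add: level_word.simps)
  moreover have "level_word (Suc n) =
      map (\<lambda>c. 3 * c) (level_word n) @ 2 # map (\<lambda>c. 3 * c + 1) (level_word n)"
    using Suc.hyps by (simp add: level_word.simps)
  ultimately show ?case
    using exits_level_up[of "Suc n"] Suc by simp
qed

lemma exits_first_sep:
  assumes "exits (level_tf n) u p j q k" "p = n" "3 \<le> n" "q \<noteq> n" "k \<noteq> 0"
  shows "\<exists>x c z. u = x @ c # z \<and> is_sep c \<and> x \<noteq> [] \<and> exits (level_tf n) u (n - 1) (int (length x)) q k"
  using assms
proof (induction rule: exits.induct)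
  case (leave j p r d)
  then show ?case
    by (cases "is_sep (u ! nat (j - 1))") (auto simp: level_tf_sep level_tf_top)
next
  case (move j p r d q k)
  show ?case
  proof (cases "is_sep (u ! nat (j - 1))")
    case True
    with move have "r = n - 1" "d = -1" by (auto simp: level_tf_sep)
    moreover have "u = take (nat (j - 1)) u @ u ! nat (j - 1) # drop (Suc (nat (j - 1))) u"
      using move.hyps(1,2) by (intro id_take_nth_drop) linarith
    ultimately show ?thesis
      using move True by (intro exI[of _ "take (nat (j - 1)) u"] exI conjI) auto
  next
    case False
    with move show ?thesis by (auto simp: level_tf_top)
  qed
qed

lemma split_maximal_suffix:
  obtains x y where "xs = x @ y" "\<forall>c\<in>set y. P c" "x = [] \<or> \<not> P (last x)"
proof
  show "xs = rev (dropWhile P (rev xs)) @ rev (takeWhile P (rev xs))"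
    by (metis rev_append rev_rev_ident takeWhile_dropWhile_id)
  show "\<forall>c\<in>set (rev (takeWhile P (rev xs))). P c"
    by (auto dest: set_takeWhileD)
  show "rev (dropWhile P (rev xs)) = [] \<or> \<not> P (last (rev (dropWhile P (rev xs))))"
    using hd_dropWhile[of P "rev xs"] by (auto simp: last_rev)
qed


lemma exits_segment_bound:
  assumes n: "3 \<le> n"
    and shortest: "\<And>v i. exits (level_tf (n - 1)) v (n - 1) i 1 (int (length v) + 1) \<Longrightarrow> L \<le> length v"
    and u: "u = x @ y @ z"
    and y: "\<forall>c\<in>set y. \<not> is_sep c"
    and x: "x = [] \<or> is_sep (last x)"
    and z: "z = [] \<or> is_sep (hd z)"
    and run: "exits (level_tf n) u (n - 1) j 1 (int (length u) + 1)"
    and j: "j \<le> int (length x + length y)"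
  shows "L \<le> length y"
proof -
  define Y where "Y = map (\<lambda>c. c div 3) y"
  define e where "e = int (length x + length y)"
  have letter_Y: "Y ! nat (i - int (length x) - 1) = u ! nat (i - 1) div 3"
    if "int (length x) < i" "i \<le> e" for i
    using nth_append_infix[OF that[unfolded e_def]] that u e_def by (simp add: Y_def nat_less_iff)
  have sep_before: "is_sep (u ! nat (i - 1))" if "1 \<le> i" "i = int (length x)" for i
  proof -
    have "nat (i - 1) = length x - 1" "x \<noteq> []" using that by auto
    then show ?thesis using x u by (simp add: nth_append last_conv_nth)
  qed
  have sep_after: "is_sep (u ! nat (i - 1))" if "i = e + 1" "i \<le> int (length u)" for i
  proof -
    have "nat (i - 1) = length x + length y" "z \<noteq> []" using that u e_def by auto
    then show ?thesis using z u by (simp add: nth_append hd_conv_nth)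
  qed
  have sep_step: "s = 1 \<and> r = n - 1 \<and> d = 1"
    if "is_sep c" "s < n" "level_tf n s c = Some (r, d)" for s c r d
    using that n by (auto simp: level_tf_sep split: if_splits)
  have sep_entry: "s = 1" if "exits (level_tf n) u s i q k" "is_sep (u ! nat (i - 1))" "s < n" for s i q k
    using exits_start[OF that(1)] sep_step that(2,3) by blast
  have step_range: "d \<in> {-1, 1}" if "level_tf n s c = Some (r, d)" for s c r d
    using level_tf_range[OF that] n by simp
  txt \<open>The block can be entered from the left only across the separator before it,
    i.e. in state n-1 at its first letter; this is where \<open>shortest\<close> is applied.\<close>
  have invariant: "s < n \<longrightarrow> i \<le> e \<longrightarrow> L \<le> length y \<or>
          (int (length x) < i \<and> exits (level_tf (n - 1)) Y s (i - int (length x)) 1 (int (length y) + 1))"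
    if "exits (level_tf n) u s i q k" "q = 1" "k = int (length u) + 1" for s i q k
    using that
  proof (induction rule: exits.induct)
    case (leave i s r d)
    show ?case
    proof (intro impI)
      assume s: "s < n" and i: "i \<le> e"
      have "i = int (length u)" "d = 1"
        using leave step_range[OF leave.hyps(3)] by auto
      then have "i = e" "z = []" using i u e_def by auto
      have "\<not> is_sep (u ! nat (i - 1))"
        using sep_step[OF _ s leave.hyps(3)] leave.prems n by auto
      then have "int (length x) < i"
        using sep_before[of i] leave.hyps(1) i e_def \<open>i = e\<close> by force
      then have Y_step: "level_tf (n - 1) s (Y ! nat (i - int (length x) - 1)) = Some (1, 1)"
        using letter_Y[of i] leave \<open>d = 1\<close> \<open>\<not> is_sep _\<close> i level_tf_lower[OF n s] by simp
      have Y_pos: "1 \<le> i - int (length x)" "i - int (length x) \<le> int (length Y)"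
        using \<open>int (length x) < i\<close> i e_def by (auto simp: Y_def)
      show "L \<le> length y \<or> (int (length x) < i \<and>
          exits (level_tf (n - 1)) Y s (i - int (length x)) 1 (int (length y) + 1))"
        using exits.leave[where delta = "level_tf (n - 1)" and u = Y and j = "i - int (length x)",
                          OF Y_pos Y_step] \<open>int (length x) < i\<close> \<open>i = e\<close> e_def
        by (auto simp: Y_def algebra_simps)
    qed
  next
    case (move i s r d q k)
    show ?case
    proof (intro impI)
      assume s: "s < n" and i: "i \<le> e"
      have r: "r < n" using level_tf_below[OF n s move.hyps(3)] .
      have d: "d \<in> {-1, 1}" using step_range[OF move.hyps(3)] .
      have IH: "i + d \<le> e \<Longrightarrow> L \<le> length y \<or> (int (length x) < i + d \<and>
          exits (level_tf (n - 1)) Y r (i + d - int (length x)) 1 (int (length y) + 1))"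
        using move.IH move.prems r by blast
      show "L \<le> length y \<or> (int (length x) < i \<and>
          exits (level_tf (n - 1)) Y s (i - int (length x)) 1 (int (length y) + 1))"
      proof (cases "is_sep (u ! nat (i - 1))")
        case True
        then have "s = 1" "r = n - 1" "d = 1" using sep_step[OF _ s move.hyps(3)] by auto
        show ?thesis
        proof (cases "i + 1 \<le> e")
          case True
          then show ?thesis
            using IH shortest[of Y] \<open>r = n - 1\<close> \<open>d = 1\<close> by (force simp: Y_def)
        next
          case False
          then have "r = 1"
            using sep_entry[OF move.hyps(5)] sep_after[of "i + d"] move.hyps(4) i r \<open>d = 1\<close> by auto
          then show ?thesis using \<open>r = n - 1\<close> n by simp
        qed
      next
        case False
        then have lower: "level_tf (n - 1) s (u ! nat (i - 1) div 3) = Some (r, d)"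
          using move.hyps(3) level_tf_lower[OF n s] by simp
        show ?thesis
        proof (cases "int (length x) < i")
          case outside: False
          then have "i < int (length x)" using sep_before[of i] False move.hyps(1) by linarith
          then show ?thesis using IH d e_def by auto
        next
          case inside: True
          then have Y_step: "level_tf (n - 1) s (Y ! nat (i - int (length x) - 1)) = Some (r, d)"
            using letter_Y[of i] i lower by simp
          have Y_pos: "1 \<le> i - int (length x)" "i - int (length x) \<le> int (length Y)"
            using inside i e_def by (auto simp: Y_def)
          show ?thesis
          proof (cases "i + d \<le> e")
            case True
            then show ?thesis
              using IH e_def inside Y_pos
                exits.move[where delta = "level_tf (n - 1)" and u = Y and j = "i - int (length x)",
                           OF Y_pos Y_step]
              by (auto simp: Y_def algebra_simps)
          next
            case False
            then have "i = e" "d = 1" using i d by auto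
            then have "r = 1"
              using sep_entry[OF move.hyps(5)] sep_after[of "i + d"] move.hyps(4) r by auto
            then show ?thesis
              using inside \<open>i = e\<close> \<open>d = 1\<close> e_def
                exits.leave[where delta = "level_tf (n - 1)" and u = Y and j = "i - int (length x)",
                            OF Y_pos Y_step[unfolded \<open>r = 1\<close>]]
              by (auto simp: Y_def algebra_simps)
          qed
        qed
      qed
    qed
  qed
  from invariant[OF run refl refl] show ?thesis
    using j n shortest[of Y] e_def by (auto simp: Y_def)
qed


lemma shortest_level_up:
  assumes n: "3 \<le> n"
    and shortest: "\<And>v i. exits (level_tf (n - 1)) v (n - 1) i 1 (int (length v) + 1) \<Longrightarrow> L \<le> length v"
    and run: "exits (level_tf n) u n i 1 (int (length u) + 1)"
  shows "2 * L + 1 \<le> length u"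
proof -
  obtain x c z where u: "u = x @ c # z" and c: "is_sep c"
    and from_sep: "exits (level_tf n) u (n - 1) (int (length x)) 1 (int (length u) + 1)"
    using exits_first_sep[OF run refl n] n by auto
  obtain x1 y1 where x: "x = x1 @ y1" "\<forall>c\<in>set y1. \<not> is_sep c" "x1 = [] \<or> is_sep (last x1)"
    using split_maximal_suffix[of x "\<lambda>c. \<not> is_sep c"] by auto
  obtain x2 y2 where z: "z = x2 @ y2" "\<forall>c\<in>set y2. \<not> is_sep c" "x2 = [] \<or> is_sep (last x2)"
    using split_maximal_suffix[of z "\<lambda>c. \<not> is_sep c"] by auto
  have "L \<le> length y1"
    by (rule exits_segment_bound[OF n shortest, where x = x1 and y = y1 and z = "c # z"
                                                 and j = "int (length x)"])
       (use u x c from_sep in auto)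
  moreover have "L \<le> length y2"
    by (rule exits_segment_bound[OF n shortest, where x = "x @ c # x2" and y = y2 and z = "[]"
                                                 and j = "int (length x)"])
       (use u z c from_sep in auto)
  ultimately show ?thesis using u x z by simp
qed

lemma level_word_shortest:
  assumes "2 \<le> n" "exits (level_tf n) u n i 1 (int (length u) + 1)"
  shows "length (level_word n) \<le> length u"
  using assms
proof (induction n arbitrary: u i rule: nat_induct_at_least)
  case base
  have "2 \<le> length u"
  proof (rule ccontr)
    assume "\<not> 2 \<le> length u"
    with exits_start[OF base] have "length u = 1" "i = 1" by auto
    with base show False by (cases rule: exits.cases) (auto simp: level_tf_2 split: if_splits)
  qed
  then show ?case by (simp add: level_word.simps)
next
  case (Suc n)
  have "length (level_word (Suc n)) = 2 * length (level_word n) + 1"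
    using Suc.hyps by (simp add: level_word.simps)
  with shortest_level_up[of "Suc n"] Suc show ?case by simp
qed

theorem mainTheorem9:
  fixes n :: nat
  assumes "n \<ge> 2"
  shows "\<exists>(Sig :: nat set) (delta :: nat \<Rightarrow> nat \<Rightarrow> (nat \<times> int) option) (w :: nat list).
           finite Sig \<and> partial_tf n Sig delta \<and> set w \<subseteq> Sig \<and>
           length w = 3 * 2 ^ (n - 2) - 1 \<and>
           (\<forall>i \<in> {1..int (length w)}. exits delta w n i 1 (int (length w) + 1)) \<and>
           (\<forall>u. set u \<subseteq> Sig \<and> u \<noteq> [] \<and>
                (\<exists>i \<in> {1..int (length u)}. exits delta u n i 1 (int (length u) + 1))
                \<longrightarrow> length u \<ge> length w)"
proof -
  define w where "w = level_word n"
  define delta where "delta = (\<lambda>q c. if c \<in> set w then level_tf n q c else None)"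
  have "partial_tf n (set w) delta"
    using level_tf_range assms by (fastforce simp: partial_tf_def delta_def split: if_splits)
  moreover have "exits delta w n i 1 (int (length w) + 1)" if "i \<in> {1..int (length w)}" for i
    using exits_transfer[OF level_word_exits[OF assms that[unfolded w_def]]]
    by (simp add: delta_def w_def)
  moreover have "length w \<le> length u" if "exits delta u n i 1 (int (length u) + 1)" for u i
  proof -
    have "exits (level_tf n) u n i 1 (int (length u) + 1)"
      using that by (rule exits_transfer) (simp add: delta_def split: if_splits)
    then show ?thesis using level_word_shortest[OF assms] by (simp add: w_def)
  qed
  moreover have "length w = 3 * 2 ^ (n - 2) - 1"
    using length_level_word[OF assms] by (simp add: w_def)
  ultimately show ?thesis
    by (intro exI[of _ "set w"] exI[of _ delta] exI[of _ w]) auto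
qed

end
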